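(* Let $U\subset\mathbb R^n$ be a smooth bounded domain and $H:\mathbb R^n\to\mathbb R$ satisfy: $H$ smooth with $H(0)<0$; $\lim_{|p|\to\infty}H(p)/|p|=\infty$; and there exist $\gamma,\delta>0$ with $DH(p)\cdot p-\gamma H(p)\ge\delta$ for all $p\in\mathbb R^n$. Let $\epsilon>0$. If $u$ and $v$ are (classical) solutions of $H(Dw)=\epsilon\Delta w$ in $U$, $w=0$ on $\partial U$, then $u=v$. *)

theory Defs
  imports "HOL-Analysis.Analysis"
begin

definition pd :: "'a::euclidean_space \<Rightarrow> ('a \<Rightarrow> real) \<Rightarrow> 'a \<Rightarrow> real" where
  "pd i f x = (THE d. ((\<lambda>t. f (x + t *\<^sub>R i)) has_real_derivative d) (at 0))"

fun iter_pd :: "'a::euclidean_space list \<Rightarrow> ('a \<Rightarrow> real) \<Rightarrow> 'a \<Rightarrow> real" where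
  "iter_pd [] f = f"
| "iter_pd (i # is) f = pd i (iter_pd is f)"

definition Ck_on :: "nat \<Rightarrow> 'a::euclidean_space set \<Rightarrow> ('a \<Rightarrow> real) \<Rightarrow> bool" where
  "Ck_on k S f \<longleftrightarrow>
     (\<forall>is. set is \<subseteq> Basis \<and> length is \<le> k \<longrightarrow>
        continuous_on S (iter_pd is f) \<and>
        (length is < k \<longrightarrow> (\<forall>x\<in>S. \<forall>i\<in>Basis.
           ((\<lambda>t. iter_pd is f (x + t *\<^sub>R i)) has_real_derivative pd i (iter_pd is f) x) (at 0))))"

definition smooth_on :: "'a::euclidean_space set \<Rightarrow> ('a \<Rightarrow> real) \<Rightarrow> bool" where
  "smooth_on S f \<longleftrightarrow> (\<forall>k. Ck_on k S f)"

definition grad :: "('a::euclidean_space \<Rightarrow> real) \<Rightarrow> 'a \<Rightarrow> 'a" where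
  "grad f x = (\<Sum>i\<in>Basis. pd i f x *\<^sub>R i)"

definition laplacian :: "('a::euclidean_space \<Rightarrow> real) \<Rightarrow> 'a \<Rightarrow> real" where
  "laplacian f x = (\<Sum>i\<in>Basis. pd i (pd i f) x)"

definition smooth_bounded_domain :: "'a::euclidean_space set \<Rightarrow> bool" where
  "smooth_bounded_domain U \<longleftrightarrow> open U \<and> bounded U \<and> connected U \<and> U \<noteq> {} \<and>
     (\<forall>x0\<in>frontier U. \<exists>r>0. \<exists>\<phi>. smooth_on UNIV \<phi> \<and> grad \<phi> x0 \<noteq> 0 \<and>
        U \<inter> ball x0 r = {x\<in>ball x0 r. \<phi> x < 0})"

definition classical_solution ::
    "('a::euclidean_space \<Rightarrow> real) \<Rightarrow> real \<Rightarrow> 'a set \<Rightarrow> ('a \<Rightarrow> real) \<Rightarrow> bool" where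
  "classical_solution H eps U w \<longleftrightarrow>
     Ck_on 2 U w \<and> continuous_on (closure U) w \<and>
     (\<forall>x\<in>U. H (grad w x) = eps * laplacian w x) \<and>
     (\<forall>x\<in>frontier U. w x = 0)"

end

theory Submission
  imports Defs
begin

text \<open>Uniqueness follows from a comparison principle that uses only the continuity of \<open>DH\<close>.
  If \<open>u - v\<close> had a positive maximum \<open>M\<close>, add \<open>\<eta> exp (\<alpha> x\<^sub>1)\<close> with \<open>\<eta>\<close> so small that the perturbed
  difference still peaks at a point \<open>x\<^sub>0\<close> of the compact set \<open>{u - v \<ge> M/2} \<subseteq> U\<close>. There
  \<open>Du = Dv - s e\<^sub>1\<close> and \<open>\<Delta>u - \<Delta>v \<le> -\<alpha> s\<close> with \<open>s = \<eta> \<alpha> exp (\<alpha> x\<^sub>0\<^sub>1)\<close>, so the equation gives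
  \<open>H (Dv - s e\<^sub>1) - H (Dv) \<le> -\<epsilon> \<alpha> s\<close>, while the mean value theorem bounds the left side below by
  \<open>-K s\<close> for \<open>K\<close> a bound of \<open>|\<partial>\<^sub>1H|\<close> near \<open>Dv\<close> on that compact set. Choosing \<open>\<epsilon> \<alpha> > K\<close>
  beforehand is a contradiction. Exchanging \<open>u\<close> and \<open>v\<close> gives equality.\<close>

lemma Ck_on_iter_pd_continuous:
  assumes "Ck_on k S f" "set is \<subseteq> Basis" "length is \<le> k"
  shows "continuous_on S (iter_pd is f)"
  using assms unfolding Ck_on_def by blast

lemma Ck_on_iter_pd_has_real_derivative:
  assumes "Ck_on k S f" "set is \<subseteq> Basis" "length is < k" "x \<in> S" "i \<in> Basis"
  shows "((\<lambda>t. iter_pd is f (x + t *\<^sub>R i)) has_real_derivative pd i (iter_pd is f) x) (at 0)"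
  using assms unfolding Ck_on_def by auto

lemma Ck_on_pd_continuous:
  assumes "Ck_on k S f" "1 \<le> k" "i \<in> Basis"
  shows "continuous_on S (pd i f)"
  using Ck_on_iter_pd_continuous[OF assms(1), of "[i]"] assms by simp

lemma Ck_on_pd_has_real_derivative:
  assumes "Ck_on k S f" "1 \<le> k" "x \<in> S" "i \<in> Basis"
  shows "((\<lambda>t. f (x + t *\<^sub>R i)) has_real_derivative pd i f x) (at 0)"
  using Ck_on_iter_pd_has_real_derivative[OF assms(1), of "[]"] assms by simp

lemma Ck_on_pd_pd_has_real_derivative:
  assumes "Ck_on k S f" "2 \<le> k" "x \<in> S" "i \<in> Basis"
  shows "((\<lambda>t. pd i f (x + t *\<^sub>R i)) has_real_derivative pd i (pd i f) x) (at 0)"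
  using Ck_on_iter_pd_has_real_derivative[OF assms(1), of "[i]"] assms by simp

lemma has_real_derivative_along_shift:
  fixes x i :: "'a::real_vector"
  assumes "((\<lambda>\<tau>. f (x + t *\<^sub>R i + \<tau> *\<^sub>R i)) has_real_derivative D) (at 0)"
  shows "((\<lambda>\<tau>. f (x + \<tau> *\<^sub>R i)) has_real_derivative D) (at t)"
proof -
  have "(\<lambda>\<tau>. f (x + (\<tau> + t) *\<^sub>R i)) = (\<lambda>\<tau>. f (x + t *\<^sub>R i + \<tau> *\<^sub>R i))"
    by (simp add: algebra_simps)
  with assms DERIV_shift[of "\<lambda>\<tau>. f (x + \<tau> *\<^sub>R i)" D 0 t] show ?thesis by simp
qed

lemma DERIV_local_max_second:
  fixes g g' :: "real \<Rightarrow> real"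
  assumes "d > 0"
    and deriv: "\<And>t. \<bar>t\<bar> < d \<Longrightarrow> (g has_real_derivative g' t) (at t)"
    and deriv2: "(g' has_real_derivative c) (at 0)"
    and max: "\<And>t. \<bar>t\<bar> < d \<Longrightarrow> g t \<le> g 0"
  shows "g' 0 = 0 \<and> c \<le> 0"
proof -
  have crit: "g' 0 = 0"
    by (rule DERIV_local_max[OF deriv[of 0] \<open>d > 0\<close>]) (use \<open>d > 0\<close> max in auto)
  have "c \<le> 0"
  proof (rule ccontr)
    assume "\<not> c \<le> 0"
    then obtain d1 where "d1 > 0" and incr: "\<And>h. 0 < h \<Longrightarrow> h < d1 \<Longrightarrow> g' 0 < g' h"
      using DERIV_pos_inc_right[OF deriv2] by force
    define t where "t = min d1 d / 2"
    have t: "0 < t" "t < d1" "t < d" using \<open>d > 0\<close> \<open>d1 > 0\<close> by (auto simp: t_def)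
    obtain z where z: "0 < z" "z < t" "g t - g 0 = t * g' z"
      using MVT2[OF t(1), of g g'] deriv t by fastforce
    have "g' z > 0" using incr[of z] z t crit by auto
    with z t max[of t] mult_pos_pos[of t "g' z"] show False by linarith
  qed
  with crit show ?thesis by simp
qed

lemma directional_local_max:
  fixes f f' :: "'a::real_normed_vector \<Rightarrow> real"
  assumes "open U" "x0 \<in> U"
    and max: "\<forall>y\<in>U. f y \<le> f x0"
    and deriv: "\<forall>y\<in>U. ((\<lambda>t. f (y + t *\<^sub>R i)) has_real_derivative f' y) (at 0)"
    and deriv2: "((\<lambda>t. f' (x0 + t *\<^sub>R i)) has_real_derivative f'') (at 0)"
  shows "f' x0 = 0 \<and> f'' \<le> 0"
proof -
  have "open ((\<lambda>t. x0 + t *\<^sub>R i) -` U)"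
    by (rule continuous_open_vimage) (auto intro!: continuous_intros simp: \<open>open U\<close>)
  moreover have "0 \<in> (\<lambda>t. x0 + t *\<^sub>R i) -` U" using \<open>x0 \<in> U\<close> by simp
  ultimately obtain d where "d > 0" and "ball 0 d \<subseteq> (\<lambda>t. x0 + t *\<^sub>R i) -` U"
    by (rule openE)
  then have line: "\<And>t. \<bar>t\<bar> < d \<Longrightarrow> x0 + t *\<^sub>R i \<in> U"
    by (auto simp: dist_real_def)
  have "((\<lambda>\<tau>. f (x0 + \<tau> *\<^sub>R i)) has_real_derivative f' (x0 + t *\<^sub>R i)) (at t)"
    if "\<bar>t\<bar> < d" for t
    by (rule has_real_derivative_along_shift) (use deriv line[OF that] in blast)
  from DERIV_local_max_second[OF \<open>d > 0\<close> this, of f''] deriv2 max line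
  show ?thesis by simp
qed

lemma grad_eq_if_pd_eq:
  assumes "\<forall>i\<in>Basis. pd i u x = pd i v x + c * (i \<bullet> e)"
  shows "grad u x = grad v x + c *\<^sub>R e"
proof -
  have "grad u x = grad v x + (\<Sum>i\<in>Basis. (c * (e \<bullet> i)) *\<^sub>R i)"
    using assms by (simp add: grad_def sum.distrib[symmetric] scaleR_add_left inner_commute)
  also have "(\<Sum>i\<in>Basis. (c * (e \<bullet> i)) *\<^sub>R i) = c *\<^sub>R (\<Sum>i\<in>Basis. (e \<bullet> i) *\<^sub>R i)"
    by (simp add: scaleR_sum_right)
  also have "\<dots> = c *\<^sub>R e"
    by (simp add: euclidean_representation)
  finally show ?thesis .
qed

lemma laplacian_le_if_pd_pd_le:
  assumes "\<forall>i\<in>Basis. pd i (pd i u) x \<le> pd i (pd i v) x + c * (i \<bullet> e)\<^sup>2"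
  shows "laplacian u x \<le> laplacian v x + c * (norm e)\<^sup>2"
proof -
  have "laplacian u x \<le> (\<Sum>i\<in>Basis. pd i (pd i v) x + c * (i \<bullet> e)\<^sup>2)"
    unfolding laplacian_def by (intro sum_mono) (use assms in blast)
  also have "\<dots> = laplacian v x + c * (e \<bullet> e)"
    by (simp add: laplacian_def sum.distrib sum_distrib_left euclidean_inner[of e e]
        power2_eq_square inner_commute)
  finally show ?thesis by (simp add: power2_norm_eq_inner)
qed

lemma exp_perturbed_max_derivatives:
  fixes u v :: "'a::euclidean_space \<Rightarrow> real"
  assumes "open U" "Ck_on 2 U u" "Ck_on 2 U v" "e \<in> Basis" "x0 \<in> U"
    and max: "\<forall>y\<in>U. u y - v y + \<eta> * exp (\<alpha> * (y \<bullet> e)) \<le> u x0 - v x0 + \<eta> * exp (\<alpha> * (x0 \<bullet> e))"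
  shows "grad u x0 = grad v x0 - (\<eta> * \<alpha> * exp (\<alpha> * (x0 \<bullet> e))) *\<^sub>R e"
    and "laplacian u x0 \<le> laplacian v x0 - \<eta> * \<alpha>\<^sup>2 * exp (\<alpha> * (x0 \<bullet> e))"
proof -
  define E where "E y = \<eta> * exp (\<alpha> * (y \<bullet> e))" for y
  have along: "(\<lambda>t. E (y + t *\<^sub>R i)) = (\<lambda>t. \<eta> * exp (\<alpha> * (y \<bullet> e + t * (i \<bullet> e))))" for y i
    by (simp add: E_def inner_add_left)
  have dE: "((\<lambda>t. E (y + t *\<^sub>R i)) has_real_derivative \<alpha> * (i \<bullet> e) * E y) (at 0)" for y i
    unfolding along by (auto intro!: derivative_eq_intros simp: E_def)
  have dE': "((\<lambda>t. \<alpha> * (i \<bullet> e) * E (x0 + t *\<^sub>R i)) has_real_derivative \<alpha>\<^sup>2 * (i \<bullet> e)\<^sup>2 * E x0) (at 0)"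
    for i using DERIV_cmult[OF dE, of "\<alpha> * (i \<bullet> e)" x0 i] by (simp add: power2_eq_square ac_simps)
  have crit: "pd i u x0 - pd i v x0 + \<alpha> * (i \<bullet> e) * E x0 = 0
      \<and> pd i (pd i u) x0 - pd i (pd i v) x0 + \<alpha>\<^sup>2 * (i \<bullet> e)\<^sup>2 * E x0 \<le> 0"
    if i: "i \<in> Basis" for i
  proof (rule directional_local_max[OF \<open>open U\<close> \<open>x0 \<in> U\<close>, where f = "\<lambda>y. u y - v y + E y"])
    show "\<forall>y\<in>U. u y - v y + E y \<le> u x0 - v x0 + E x0" using max by (simp add: E_def)
    show "\<forall>y\<in>U. ((\<lambda>t. u (y + t *\<^sub>R i) - v (y + t *\<^sub>R i) + E (y + t *\<^sub>R i)) has_real_derivative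
        pd i u y - pd i v y + \<alpha> * (i \<bullet> e) * E y) (at 0)"
      using Ck_on_pd_has_real_derivative[OF assms(2)] Ck_on_pd_has_real_derivative[OF assms(3)] i
      by (intro ballI DERIV_add DERIV_diff dE) auto
    show "((\<lambda>t. pd i u (x0 + t *\<^sub>R i) - pd i v (x0 + t *\<^sub>R i) + \<alpha> * (i \<bullet> e) * E (x0 + t *\<^sub>R i))
        has_real_derivative pd i (pd i u) x0 - pd i (pd i v) x0 + \<alpha>\<^sup>2 * (i \<bullet> e)\<^sup>2 * E x0) (at 0)"
      using Ck_on_pd_pd_has_real_derivative[OF assms(2)] Ck_on_pd_pd_has_real_derivative[OF assms(3)]
        i \<open>x0 \<in> U\<close> by (intro DERIV_add DERIV_diff dE') auto
  qed
  have "grad u x0 = grad v x0 + (- (\<alpha> * E x0)) *\<^sub>R e"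
    by (rule grad_eq_if_pd_eq) (use crit in \<open>auto simp: algebra_simps\<close>)
  then show "grad u x0 = grad v x0 - (\<eta> * \<alpha> * exp (\<alpha> * (x0 \<bullet> e))) *\<^sub>R e"
    by (simp add: E_def ac_simps)
  have "laplacian u x0 \<le> laplacian v x0 + (- (\<alpha>\<^sup>2 * E x0)) * (norm e)\<^sup>2"
    by (rule laplacian_le_if_pd_pd_le) (use crit in \<open>auto simp: algebra_simps\<close>)
  then show "laplacian u x0 \<le> laplacian v x0 - \<eta> * \<alpha>\<^sup>2 * exp (\<alpha> * (x0 \<bullet> e))"
    using \<open>e \<in> Basis\<close> by (simp add: E_def ac_simps)
qed

lemma directional_mean_value_bound:
  fixes H :: "'a::real_normed_vector \<Rightarrow> real"
  assumes deriv: "\<forall>y. ((\<lambda>t. H (y + t *\<^sub>R e)) has_real_derivative D y) (at 0)"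
    and bound: "\<forall>t. 0 \<le> t \<and> t \<le> s \<longrightarrow> \<bar>D (q - t *\<^sub>R e)\<bar> \<le> K"
    and "0 \<le> s"
  shows "H q - H (q - s *\<^sub>R e) \<le> K * s"
proof (cases "s = 0")
  case False
  have "((\<lambda>t. H (q + t *\<^sub>R e)) has_real_derivative D (q + t *\<^sub>R e)) (at t)" for t
    by (rule has_real_derivative_along_shift) (use deriv in blast)
  then obtain z where z: "- s < z" "z < 0" "H q - H (q - s *\<^sub>R e) = s * D (q + z *\<^sub>R e)"
    using MVT2[of "- s" 0 "\<lambda>t. H (q + t *\<^sub>R e)"] \<open>0 \<le> s\<close> False by fastforce
  have "D (q + z *\<^sub>R e) \<le> K" using bound[rule_format, of "- z"] z by simp
  with z \<open>0 \<le> s\<close> show ?thesis by (simp add: mult.commute mult_left_mono)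
qed simp

lemma exp_perturbed_max_rate_le:
  fixes U :: "'a::euclidean_space set" and H u v :: "'a \<Rightarrow> real"
  assumes "open U" "Ck_on 1 UNIV H" "\<epsilon> \<ge> 0"
    and u: "classical_solution H \<epsilon> U u" and v: "classical_solution H \<epsilon> U v"
    and "e \<in> Basis" "x0 \<in> U" "\<eta> > 0" "\<alpha> > 0"
    and max: "\<forall>y\<in>U. u y - v y + \<eta> * exp (\<alpha> * (y \<bullet> e)) \<le> u x0 - v x0 + \<eta> * exp (\<alpha> * (x0 \<bullet> e))"
    and small: "\<eta> * \<alpha> * exp (\<alpha> * (x0 \<bullet> e)) \<le> 1"
    and K: "\<forall>y\<in>cball (grad v x0) 1. \<bar>pd e H y\<bar> \<le> K"
  shows "\<epsilon> * \<alpha> \<le> K"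
proof -
  define s where "s = \<eta> * \<alpha> * exp (\<alpha> * (x0 \<bullet> e))"
  define q where "q = grad v x0"
  have "s > 0" using \<open>\<eta> > 0\<close> \<open>\<alpha> > 0\<close> by (simp add: s_def)
  have "Ck_on 2 U u" "Ck_on 2 U v" using u v by (auto simp: classical_solution_def)
  note at_max = exp_perturbed_max_derivatives[OF \<open>open U\<close> this \<open>e \<in> Basis\<close> \<open>x0 \<in> U\<close> max]
  have "H (q - s *\<^sub>R e) - H q = \<epsilon> * (laplacian u x0 - laplacian v x0)"
    using u v \<open>x0 \<in> U\<close> unfolding classical_solution_def
    by (simp add: q_def s_def right_diff_distrib flip: at_max(1))
  also have "\<dots> \<le> - (\<epsilon> * \<alpha>) * s"
    using at_max(2) \<open>\<epsilon> \<ge> 0\<close> mult_left_mono[of _ _ \<epsilon>]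
    by (fastforce simp: s_def power2_eq_square algebra_simps)
  finally have "H (q - s *\<^sub>R e) - H q \<le> - (\<epsilon> * \<alpha>) * s" .
  moreover have "H q - H (q - s *\<^sub>R e) \<le> K * s"
  proof (rule directional_mean_value_bound)
    show "\<forall>y. ((\<lambda>t. H (y + t *\<^sub>R e)) has_real_derivative pd e H y) (at 0)"
      using Ck_on_pd_has_real_derivative[OF \<open>Ck_on 1 UNIV H\<close> _ _ \<open>e \<in> Basis\<close>] by simp
    have "q - t *\<^sub>R e \<in> cball q 1" if "0 \<le> t" "t \<le> s" for t
      using that small \<open>e \<in> Basis\<close> by (simp add: dist_norm s_def)
    then show "\<forall>t. 0 \<le> t \<and> t \<le> s \<longrightarrow> \<bar>pd e H (q - t *\<^sub>R e)\<bar> \<le> K"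
      using K by (simp add: q_def)
  qed (use \<open>s > 0\<close> in simp)
  ultimately have "(\<epsilon> * \<alpha>) * s \<le> K * s" using mult_minus_left[of "\<epsilon> * \<alpha>" s] by linarith
  with \<open>s > 0\<close> show ?thesis by simp
qed

lemma compact_superlevel_set:
  fixes \<psi> :: "'a::t2_space \<Rightarrow> real"
  assumes "compact S" "continuous_on S \<psi>"
  shows "compact {x\<in>S. c \<le> \<psi> x}"
proof -
  have "closed {x\<in>S. c \<le> \<psi> x}"
    by (rule continuous_on_closed_Collect_le) (use assms compact_imp_closed in auto)
  with compact_Int_closed[OF \<open>compact S\<close>] show ?thesis
    by (metis (no_types, lifting) Int_absorb1 mem_Collect_eq subsetI)
qed

lemma exists_small_exp_inner:
  fixes S :: "'a::real_inner set"
  assumes "bounded S" "m > 0"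
  obtains \<eta> where "\<eta> > 0" "\<forall>x\<in>S. \<eta> * exp (\<alpha> * (x \<bullet> e)) \<le> m"
proof -
  obtain R where R: "\<And>x. x \<in> S \<Longrightarrow> norm x \<le> R"
    using \<open>bounded S\<close> unfolding bounded_iff by blast
  define \<eta> where "\<eta> = m / exp (\<bar>\<alpha>\<bar> * (R * norm e))"
  have "\<eta> > 0" using \<open>m > 0\<close> by (simp add: \<eta>_def)
  moreover have "\<forall>x\<in>S. \<eta> * exp (\<alpha> * (x \<bullet> e)) \<le> m"
  proof
    fix x assume "x \<in> S"
    have "\<alpha> * (x \<bullet> e) \<le> \<bar>\<alpha>\<bar> * \<bar>x \<bullet> e\<bar>" by (simp add: abs_mult[symmetric])
    also have "\<dots> \<le> \<bar>\<alpha>\<bar> * (R * norm e)"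
    proof -
      have "\<bar>x \<bullet> e\<bar> \<le> R * norm e"
        using Cauchy_Schwarz_ineq2[of x e] mult_right_mono[OF R[OF \<open>x \<in> S\<close>] norm_ge_zero[of e]]
        by linarith
      then show ?thesis by (simp add: mult_left_mono)
    qed
    finally have "exp (\<alpha> * (x \<bullet> e)) \<le> exp (\<bar>\<alpha>\<bar> * (R * norm e))" by simp
    then show "\<eta> * exp (\<alpha> * (x \<bullet> e)) \<le> m"
      using \<open>m > 0\<close> by (simp add: \<eta>_def divide_le_eq mult.commute)
  qed
  ultimately show ?thesis using that by blast
qed

lemma max_of_small_perturbation:
  fixes \<psi> w :: "'a::topological_space \<Rightarrow> real"
  assumes "compact S" "S \<noteq> {}" "continuous_on S \<psi>" "continuous_on S w"
    and w: "\<forall>x\<in>S. 0 < w x \<and> w x \<le> c"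
  obtains x0 where "x0 \<in> S" "\<forall>y\<in>S. \<psi> y + w y \<le> \<psi> x0 + w x0" "\<forall>y\<in>S. \<psi> y - c < \<psi> x0"
proof -
  obtain x0 where "x0 \<in> S" and max: "\<forall>y\<in>S. \<psi> y + w y \<le> \<psi> x0 + w x0"
    using continuous_attains_sup[of S "\<lambda>x. \<psi> x + w x"] assms(1-4)
    by (auto intro: continuous_on_add)
  moreover have "\<psi> y - c < \<psi> x0" if "y \<in> S" for y
  proof -
    have "0 < w y" "w x0 \<le> c" "\<psi> y + w y \<le> \<psi> x0 + w x0"
      using max w that \<open>x0 \<in> S\<close> by auto
    then show ?thesis by linarith
  qed
  ultimately show ?thesis using that by blast
qed

lemma exp_perturbed_max_near:
  fixes \<psi> :: "'a::real_inner \<Rightarrow> real"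
  assumes "compact S" "continuous_on S \<psi>" "xm \<in> S" "M > 0" "\<alpha> > 0"
  obtains \<eta> x0 where "\<eta> > 0" "x0 \<in> S"
    "\<forall>y\<in>S. \<psi> y + \<eta> * exp (\<alpha> * (y \<bullet> e)) \<le> \<psi> x0 + \<eta> * exp (\<alpha> * (x0 \<bullet> e))"
    "\<psi> xm - M < \<psi> x0" "\<eta> * \<alpha> * exp (\<alpha> * (x0 \<bullet> e)) \<le> 1"
proof -
  obtain \<eta> where "\<eta> > 0" and \<eta>: "\<forall>x\<in>S. \<eta> * exp (\<alpha> * (x \<bullet> e)) \<le> min M (1/\<alpha>)"
    using exists_small_exp_inner[OF compact_imp_bounded[OF \<open>compact S\<close>], of "min M (1/\<alpha>)"]
      \<open>M > 0\<close> \<open>\<alpha> > 0\<close> by auto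
  obtain x0 where "x0 \<in> S"
    and "\<forall>y\<in>S. \<psi> y + \<eta> * exp (\<alpha> * (y \<bullet> e)) \<le> \<psi> x0 + \<eta> * exp (\<alpha> * (x0 \<bullet> e))"
    and "\<forall>y\<in>S. \<psi> y - M < \<psi> x0"
    by (rule max_of_small_perturbation[OF \<open>compact S\<close> _ \<open>continuous_on S \<psi>\<close>,
          where w = "\<lambda>y. \<eta> * exp (\<alpha> * (y \<bullet> e))" and c = M])
      (use \<open>xm \<in> S\<close> \<eta> \<open>\<eta> > 0\<close> in \<open>auto intro!: continuous_intros\<close>)
  moreover have "\<eta> * \<alpha> * exp (\<alpha> * (x0 \<bullet> e)) \<le> 1"
    using \<eta> \<open>x0 \<in> S\<close> \<open>\<alpha> > 0\<close> by (auto simp: field_simps)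
  ultimately show ?thesis using that \<open>\<eta> > 0\<close> \<open>xm \<in> S\<close> by blast
qed

lemma comparison_principle:
  fixes U :: "'a::euclidean_space set" and H u v :: "'a \<Rightarrow> real"
  assumes "open U" "bounded U" "Ck_on 1 UNIV H" "\<epsilon> > 0"
    and u: "classical_solution H \<epsilon> U u" and v: "classical_solution H \<epsilon> U v"
  shows "\<forall>x\<in>closure U. u x \<le> v x"
proof (rule ccontr)
  define S where "S = closure U"
  define \<psi> where "\<psi> x = u x - v x" for x
  assume "\<not> (\<forall>x\<in>closure U. u x \<le> v x)"
  then obtain x1 where x1: "x1 \<in> S" "\<psi> x1 > 0" by (auto simp: S_def \<psi>_def)
  have "compact S" using \<open>bounded U\<close> by (simp add: S_def compact_closure)
  have "continuous_on S \<psi>"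
    using u v by (auto simp: \<psi>_def S_def classical_solution_def intro!: continuous_intros)
  have \<psi>_zero_outside: "\<psi> x = 0" if "x \<in> S" "x \<notin> U" for x
    using that u v \<open>open U\<close>
    by (simp add: \<psi>_def S_def classical_solution_def frontier_def interior_open)
  obtain xm where "xm \<in> S" and \<psi>_max: "\<And>y. y \<in> S \<Longrightarrow> \<psi> y \<le> \<psi> xm"
    using continuous_attains_sup[OF \<open>compact S\<close> _ \<open>continuous_on S \<psi>\<close>] x1 by blast
  define M where "M = \<psi> xm"
  have "M > 0" using \<psi>_max[OF x1(1)] x1 by (simp add: M_def)
  define V where "V = {x\<in>S. M/2 \<le> \<psi> x}"
  have "V \<subseteq> U" using \<psi>_zero_outside \<open>M > 0\<close> by (force simp: V_def)
  have "compact V"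
    unfolding V_def by (rule compact_superlevel_set[OF \<open>compact S\<close> \<open>continuous_on S \<psi>\<close>])
  have "continuous_on V (grad v)"
    using Ck_on_pd_continuous[of 2 U v] v \<open>V \<subseteq> U\<close> unfolding grad_def classical_solution_def
    by (auto intro!: continuous_intros intro: continuous_on_subset)
  then have "bounded (grad v ` V)"
    by (intro compact_imp_bounded compact_continuous_image \<open>compact V\<close>)
  then obtain B where B: "\<And>x. x \<in> V \<Longrightarrow> norm (grad v x) \<le> B"
    unfolding bounded_iff by auto
  obtain e :: 'a where "e \<in> Basis" using nonempty_Basis by blast
  have "bounded (pd e H ` cball 0 (B + 1))"
    using Ck_on_pd_continuous[OF \<open>Ck_on 1 UNIV H\<close> _ \<open>e \<in> Basis\<close>]
    by (intro compact_imp_bounded compact_continuous_image) (auto intro: continuous_on_subset)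
  then obtain K where "\<forall>z\<in>pd e H ` cball 0 (B + 1). norm z \<le> K"
    unfolding bounded_iff by blast
  then have K: "\<And>y. y \<in> cball 0 (B + 1) \<Longrightarrow> \<bar>pd e H y\<bar> \<le> K" by auto
  define \<alpha> where "\<alpha> = (\<bar>K\<bar> + 1) / \<epsilon>"
  have "\<alpha> > 0" and \<epsilon>\<alpha>: "\<epsilon> * \<alpha> = \<bar>K\<bar> + 1" using \<open>\<epsilon> > 0\<close> by (auto simp: \<alpha>_def)
  obtain \<eta> x0 where "\<eta> > 0" "x0 \<in> S"
    and x0_max: "\<forall>y\<in>S. \<psi> y + \<eta> * exp (\<alpha> * (y \<bullet> e)) \<le> \<psi> x0 + \<eta> * exp (\<alpha> * (x0 \<bullet> e))"
    and "\<psi> xm - M/2 < \<psi> x0" and small: "\<eta> * \<alpha> * exp (\<alpha> * (x0 \<bullet> e)) \<le> 1"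
    using exp_perturbed_max_near[OF \<open>compact S\<close> \<open>continuous_on S \<psi>\<close> \<open>xm \<in> S\<close>, of "M/2" \<alpha>]
      \<open>M > 0\<close> \<open>\<alpha> > 0\<close> by auto
  then have "x0 \<in> V" by (simp add: V_def M_def)
  have "\<epsilon> * \<alpha> \<le> K"
  proof (rule exp_perturbed_max_rate_le[OF \<open>open U\<close> \<open>Ck_on 1 UNIV H\<close> _ u v \<open>e \<in> Basis\<close> _ \<open>\<eta> > 0\<close> \<open>\<alpha> > 0\<close> _ small])
    show "x0 \<in> U" using \<open>x0 \<in> V\<close> \<open>V \<subseteq> U\<close> by blast
    show "\<forall>y\<in>U. u y - v y + \<eta> * exp (\<alpha> * (y \<bullet> e)) \<le> u x0 - v x0 + \<eta> * exp (\<alpha> * (x0 \<bullet> e))"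
      using x0_max closure_subset by (force simp: \<psi>_def S_def)
    have "norm y \<le> B + 1" if "y \<in> cball (grad v x0) 1" for y
      using that B[OF \<open>x0 \<in> V\<close>] norm_triangle_sub[of y "grad v x0"]
      by (simp add: dist_norm norm_minus_commute)
    then show "\<forall>y\<in>cball (grad v x0) 1. \<bar>pd e H y\<bar> \<le> K" using K by simp
  qed (use \<open>\<epsilon> > 0\<close> in simp)
  then show False using \<epsilon>\<alpha> by simp
qed

theorem theorem6:
  fixes U :: "'a::euclidean_space set" and H :: "'a \<Rightarrow> real"
    and \<gamma> \<delta> \<epsilon> :: real and u v :: "'a \<Rightarrow> real"
  assumes "smooth_bounded_domain U"
    and "smooth_on UNIV H"
    and "H 0 < 0"
    and "filterlim (\<lambda>p. H p / norm p) at_top at_infinity"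
    and "\<gamma> > 0" and "\<delta> > 0"
    and "\<forall>p. grad H p \<bullet> p - \<gamma> * H p \<ge> \<delta>"
    and "\<epsilon> > 0"
    and "classical_solution H \<epsilon> U u"
    and "classical_solution H \<epsilon> U v"
  shows "\<forall>x\<in>closure U. u x = v x"
proof -
  have "open U" "bounded U" using assms(1) by (auto simp: smooth_bounded_domain_def)
  moreover have "Ck_on 1 UNIV H" using assms(2) by (simp add: smooth_on_def)
  ultimately have "\<forall>x\<in>closure U. u x \<le> v x" "\<forall>x\<in>closure U. v x \<le> u x"
    using comparison_principle assms(8-10) by blast+
  then show ?thesis by (meson order_antisym)
qed

end
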